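(* Let $1\leq m\leq n$, let $\Omega$ be a region of $\mathbb{C}$, and let $F:\Omega\to\mathbb{M}_n$ be analytic. Suppose that for each $k=1,\ldots,m$ the function $z\mapsto s_k(F(z))$ attains its maximum value on $\Omega$. Then $s_k(F(z))$ is constant on $\Omega$ for each $k=1,\ldots,m$.
   Context: A region is a nonempty open connected subset of $\mathbb{C}$. $\mathbb{M}_n$ is the set of $n\times n$ complex matrices; $F$ is analytic if each entry is analytic. For $A\in\mathbb{M}_n$, the singular values $s_1(A)\geq\cdots\geq s_n(A)$ are the nonnegative square roots of the eigenvalues of $A^*A$ in nonincreasing order. *)

theory Defs
  imports "HOL-Analysis.Analysis" "HOL-Computational_Algebra.Fundamental_Theorem_Algebra"
begin

definition adjoint_mat :: "complex^'n^'n \<Rightarrow> complex^'n^'n" where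
  "adjoint_mat A = (\<chi> i j. cnj (A $ j $ i))"

definition char_poly_mat :: "complex^'n^'n \<Rightarrow> complex poly" where
  "char_poly_mat A = det (\<chi> i j. (if i = j then [:0, 1:] else 0) - [:A $ i $ j:])"

definition eigenvalues_mset :: "complex^'n^'n \<Rightarrow> complex multiset" where
  "eigenvalues_mset A = proots (char_poly_mat A)"

text \<open>Singular values in nonincreasing order, as a list of length n
  (eigenvalues of A^*A are real and nonnegative).\<close>
definition singular_values :: "complex^'n^'n \<Rightarrow> real list" where
  "singular_values A =
     rev (sorted_list_of_multiset
       (image_mset (\<lambda>z. sqrt (Re z)) (eigenvalues_mset (adjoint_mat A ** A))))"

text \<open>s_k(A), 1-based index k.\<close>
definition sval :: "nat \<Rightarrow> complex^'n^'n \<Rightarrow> real" where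
  "sval k A = singular_values A ! (k - 1)"

end

(*
  Write KF_k(A) = s_1(A) + ... + s_k(A) for the Ky Fan k-norm. It is the maximum of
  Re (SUM i:I. <A u_i, v_i>) over pairs of orthonormal families u, v indexed by a set I with
  |I| <= k, and the maximum is attained at right singular vectors u_i and the corresponding left
  singular vectors v_i. For analytic F each such sum, evaluated at F z, is a holomorphic function
  of z. If KF_k(F z) is maximal at z0, pick u, v attaining KF_k(F z0): the real part of the
  corresponding holomorphic function is then maximal at z0, hence constant, and it squeezes
  KF_k(F z) to a constant. Since s_k = KF_k - KF_(k-1), induction on k shows that s_1, ..., s_m
  are constant.

  The singular values, defined through the characteristic polynomial of A^* A, are the square
  roots of the eigenvalues of A^* A in an orthonormal eigenbasis; the eigenbasis, with its
  eigenvalues in decreasing order, comes from the variational proof of the spectral theorem.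
*)
theory Submission
  imports Defs "HOL-Complex_Analysis.Conformal_Mappings"
begin

definition cinner :: "complex^'n \<Rightarrow> complex^'n \<Rightarrow> complex" where
  "cinner x y = (\<Sum>i\<in>UNIV. x$i * cnj (y$i))"

lemma cinner_commute: "cinner y x = cnj (cinner x y)"
  by (simp add: cinner_def mult.commute)

lemma Re_cinner: "Re (cinner x y) = inner x y"
  by (simp add: cinner_def inner_vec_def inner_complex_def)

lemma cinner_self: "cinner x x = of_real ((norm x)\<^sup>2)"
proof -
  have "cinner x x = (\<Sum>i\<in>UNIV. of_real ((cmod (x$i))\<^sup>2))"
    unfolding cinner_def by (intro sum.cong refl) (metis complex_norm_square)
  moreover have "(norm x)\<^sup>2 = (\<Sum>i\<in>UNIV. (cmod (x$i))\<^sup>2)"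
    by (simp add: norm_vec_def L2_set_def sum_nonneg)
  ultimately show ?thesis
    by (simp add: of_real_sum)
qed

lemma cinner_sum_left: "cinner (sum f I) y = (\<Sum>i\<in>I. cinner (f i) y)"
  unfolding cinner_def sum_component sum_distrib_right by (rule sum.swap)

lemma cinner_sum_right: "cinner y (sum f I) = (\<Sum>i\<in>I. cinner y (f i))"
  by (subst cinner_commute) (simp add: cinner_sum_left cinner_commute[of y])

lemma cinner_add_left: "cinner (x + y) z = cinner x z + cinner y z"
  by (simp add: cinner_def distrib_right sum.distrib)

lemma cinner_diff_left: "cinner (x - y) z = cinner x z - cinner y z"
  by (simp add: cinner_def left_diff_distrib sum_subtractf)

lemma cinner_diff_right: "cinner z (x - y) = cinner z x - cinner z y"
  by (simp add: cinner_def right_diff_distrib sum_subtractf)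

lemma cinner_scale_left: "cinner (c *s x) y = c * cinner x y"
  by (simp add: cinner_def sum_distrib_left mult.assoc)

lemma cinner_scale_right: "cinner x (c *s y) = cnj c * cinner x y"
  by (simp add: cinner_def sum_distrib_left mult_ac)

lemma cinner_scaleR_left: "cinner (c *\<^sub>R x) y = of_real c * cinner x y"
  unfolding cinner_def vector_scaleR_component
  by (simp add: sum_distrib_left mult.assoc scaleR_conv_of_real)

lemma cinner_scaleR_right: "cinner x (c *\<^sub>R y) = of_real c * cinner x y"
  unfolding cinner_def vector_scaleR_component
  by (simp add: sum_distrib_left mult_ac scaleR_conv_of_real)

lemma cinner_zero_left [simp]: "cinner 0 y = 0"
  by (simp add: cinner_def)

lemma cinner_zero_right [simp]: "cinner x 0 = 0"
  by (simp add: cinner_def)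

lemma cmod_cinner_commute: "cmod (cinner x y) = cmod (cinner y x)"
  by (subst cinner_commute) simp

lemma cinner_adjoint_mat: "cinner (adjoint_mat A *v x) y = cinner x (A *v y)"
proof -
  have "cinner (adjoint_mat A *v x) y = (\<Sum>i\<in>UNIV. \<Sum>j\<in>UNIV. cnj (A$j$i) * x$j * cnj (y$i))"
    by (simp add: cinner_def adjoint_mat_def matrix_vector_mult_def sum_distrib_right)
  also have "\<dots> = (\<Sum>j\<in>UNIV. \<Sum>i\<in>UNIV. cnj (A$j$i) * x$j * cnj (y$i))"
    by (rule sum.swap)
  also have "\<dots> = cinner x (A *v y)"
    by (simp add: cinner_def matrix_vector_mult_def sum_distrib_left mult_ac)
  finally show ?thesis .
qed

lemma cinner_adjoint_mult_self: "cinner ((adjoint_mat A ** A) *v x) y = cinner (A *v x) (A *v y)"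
  by (simp add: matrix_vector_mul_assoc[symmetric] cinner_adjoint_mat)

definition orthonormal_on :: "'i set \<Rightarrow> ('i \<Rightarrow> complex^'n) \<Rightarrow> bool" where
  "orthonormal_on I e \<longleftrightarrow> (\<forall>i\<in>I. \<forall>j\<in>I. cinner (e i) (e j) = (if i = j then 1 else 0))"

lemma orthonormal_onD:
  "orthonormal_on I e \<Longrightarrow> i \<in> I \<Longrightarrow> j \<in> I \<Longrightarrow> cinner (e i) (e j) = (if i = j then 1 else 0)"
  by (simp add: orthonormal_on_def)

lemma orthonormal_on_subset: "orthonormal_on I e \<Longrightarrow> J \<subseteq> I \<Longrightarrow> orthonormal_on J e"
  unfolding orthonormal_on_def by blast

lemma norm_orthonormal_on:
  assumes "orthonormal_on I e" and "i \<in> I"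
  shows "norm (e i) = 1"
proof -
  have "of_real ((norm (e i))\<^sup>2) = (1 :: complex)"
    using orthonormal_onD[OF assms assms(2)] by (simp add: cinner_self)
  then show ?thesis
    by (smt (verit) norm_ge_zero of_real_eq_1_iff power2_eq_1_iff)
qed

lemma bessel_inequality:
  assumes "finite I" and on: "orthonormal_on I e"
  shows "(\<Sum>i\<in>I. (cmod (cinner x (e i)))\<^sup>2) \<le> (norm x)\<^sup>2"
proof -
  define c where "c i = cinner x (e i)" for i
  define p where "p = (\<Sum>i\<in>I. c i *s e i)"
  define T where "T = (\<Sum>i\<in>I. (cmod (c i))\<^sup>2)"
  have "cinner p (e j) = c j" if "j \<in> I" for j
  proof -
    have "cinner p (e j) = (\<Sum>i\<in>I. c i * (if i = j then 1 else 0))"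
      unfolding p_def cinner_sum_left cinner_scale_left
      using on that by (intro sum.cong refl) (simp add: orthonormal_on_def)
    then show ?thesis
      using \<open>finite I\<close> that by (simp add: if_distrib cong: if_cong)
  qed
  then have pp: "cinner p p = of_real T"
    unfolding T_def of_real_sum
    by (subst (2) p_def) (auto simp: cinner_sum_right cinner_scale_right complex_norm_square[symmetric]
        mult.commute simp del: of_real_power intro!: sum.cong)
  have xp: "cinner x p = of_real T"
    unfolding T_def of_real_sum p_def
    by (auto simp: cinner_sum_right cinner_scale_right c_def complex_norm_square[symmetric] mult.commute
        simp del: of_real_power
        intro!: sum.cong)
  then have px: "cinner p x = of_real T"
    by (subst cinner_commute) simp
  have "cinner (x - p) (x - p) = of_real ((norm x)\<^sup>2 - T)"
    by (simp add: cinner_diff_left cinner_diff_right pp xp px cinner_self[of x] del: of_real_power)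
  then have "(norm (x - p))\<^sup>2 = (norm x)\<^sup>2 - T"
    by (metis cinner_self of_real_eq_iff)
  then show ?thesis
    using zero_le_power2[of "norm (x - p)"] by (simp add: T_def c_def)
qed

lemma sum_cmod_cinner_sq_le_1:
  assumes "finite I" and "orthonormal_on I e" and "norm x \<le> 1"
  shows "(\<Sum>i\<in>I. (cmod (cinner x (e i)))\<^sup>2) \<le> 1"
  using bessel_inequality[OF assms(1,2), of x] assms(3) by (smt (verit) norm_ge_zero power_le_one)

lemma orthonormal_weights_bounds:
  fixes u :: "'i \<Rightarrow> complex^'n" and e :: "nat \<Rightarrow> complex^'n"
  assumes "finite I" and u: "orthonormal_on I u" and e: "orthonormal_on {l. l < n \<and> e l \<noteq> 0} e"
  shows "\<And>l. l < n \<Longrightarrow> (\<Sum>i\<in>I. (cmod (cinner (u i) (e l)))\<^sup>2) \<le> 1"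
    and "(\<Sum>l<n. \<Sum>i\<in>I. (cmod (cinner (u i) (e l)))\<^sup>2) \<le> card I"
proof -
  show "(\<Sum>i\<in>I. (cmod (cinner (u i) (e l)))\<^sup>2) \<le> 1" if "l < n" for l
  proof -
    have "norm (e l) \<le> 1"
      using norm_orthonormal_on[OF e, of l] that by (cases "e l = 0") auto
    then show ?thesis
      unfolding cmod_cinner_commute[of "u _"] by (intro sum_cmod_cinner_sq_le_1 \<open>finite I\<close> u)
  qed
  have "(\<Sum>l<n. \<Sum>i\<in>I. (cmod (cinner (u i) (e l)))\<^sup>2)
      = (\<Sum>i\<in>I. \<Sum>l\<in>{l. l < n \<and> e l \<noteq> 0}. (cmod (cinner (u i) (e l)))\<^sup>2)"
    by (subst sum.swap) (intro sum.cong refl sum.mono_neutral_right; auto)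
  also have "\<dots> \<le> (\<Sum>i\<in>I. 1)"
    using \<open>finite I\<close> e norm_orthonormal_on[OF u] by (intro sum_mono sum_cmod_cinner_sq_le_1) auto
  finally show "(\<Sum>l<n. \<Sum>i\<in>I. (cmod (cinner (u i) (e l)))\<^sup>2) \<le> card I"
    by simp
qed

lemma exists_orthogonal_nonzero:
  fixes w :: "nat \<Rightarrow> complex^'n"
  assumes "r < CARD('n)"
  obtains x where "x \<noteq> 0" and "\<forall>i<r. cinner x (w i) = 0"
proof -
  \<comment> \<open>complex orthogonality to \<open>w i\<close> is real orthogonality to \<open>w i\<close> and to \<open>\<i> w i\<close>\<close>
  define S where "S = w ` {..<r} \<union> (\<lambda>i. \<i> *s w i) ` {..<r}"
  have "dim S \<le> card S"
    by (rule dim_le_card) (auto simp: S_def span_superset)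
  also have "\<dots> \<le> card (w ` {..<r}) + card ((\<lambda>i. \<i> *s w i) ` {..<r})"
    unfolding S_def by (rule card_Un_le)
  also have "\<dots> \<le> 2 * r"
    using card_image_le[of "{..<r}" w] card_image_le[of "{..<r}" "\<lambda>i. \<i> *s w i"] by simp
  also have "\<dots> < DIM(complex^'n)"
    using assms by simp
  finally obtain x where x: "x \<noteq> 0" "\<And>y. y \<in> span S \<Longrightarrow> orthogonal x y"
    by (rule orthogonal_to_subspace_exists) blast
  have "cinner x (w i) = 0" if "i < r" for i
  proof -
    have "inner x (w i) = 0" "inner x (\<i> *s w i) = 0"
      using x(2) that by (auto simp: S_def orthogonal_def span_base)
    then show ?thesis
      by (simp add: complex_eq_iff Re_cinner[symmetric] cinner_scale_right)
  qed
  then show ?thesis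
    using that x(1) by blast
qed

lemma unitary_of_orthonormal_basis:
  fixes w :: "nat \<Rightarrow> complex^'n"
  assumes on: "orthonormal_on {..<CARD('n)} w" and h: "bij_betw h UNIV {..<CARD('n)}"
  shows "(\<chi> i a. w (h a) $ i) ** adjoint_mat (\<chi> i a. w (h a) $ i) = mat 1"
proof -
  have "inj h" and "h a < CARD('n)" for a
    using h by (auto simp: bij_betw_def)
  then have "adjoint_mat (\<chi> i a. w (h a) $ i) ** (\<chi> i a. w (h a) $ i) = mat 1"
    using orthonormal_onD[OF on]
    by (auto simp: vec_eq_iff matrix_matrix_mult_def adjoint_mat_def mat_def cinner_def
        mult.commute inj_eq)
  then show ?thesis
    by (rule matrix_left_right_inverse[THEN iffD1])
qed

lemma orthonormal_basis_expansion:
  fixes w :: "nat \<Rightarrow> complex^'n"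
  assumes on: "orthonormal_on {..<CARD('n)} w"
  shows "x = (\<Sum>l<CARD('n). cinner x (w l) *s w l)"
proof -
  obtain h :: "'n \<Rightarrow> nat" where h: "bij_betw h UNIV {..<CARD('n)}"
    using ex_bij_betw_finite_nat[of "UNIV :: 'n set"] by (auto simp: lessThan_atLeast0)
  define W :: "complex^'n^'n" where "W = (\<chi> i a. w (h a) $ i)"
  have "x = W *v (adjoint_mat W *v x)"
    using unitary_of_orthonormal_basis[OF on h] by (simp add: matrix_vector_mul_assoc W_def)
  also have "\<dots> = (\<Sum>a\<in>UNIV. cinner x (w (h a)) *s w (h a))"
    by (simp add: vec_eq_iff W_def adjoint_mat_def matrix_vector_mult_def cinner_def sum_component
        sum_distrib_left mult_ac)
  also have "\<dots> = (\<Sum>l<CARD('n). cinner x (w l) *s w l)"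
    by (rule sum.reindex_bij_betw[OF h])
  finally show ?thesis .
qed

section \<open>Spectral theorem for Hermitian matrices\<close>

definition hermitian :: "complex^'n^'n \<Rightarrow> bool" where
  "hermitian H \<longleftrightarrow> (\<forall>x y. cinner (H *v x) y = cinner x (H *v y))"

lemma hermitian_adjoint_mult_self: "hermitian (adjoint_mat A ** A)"
  unfolding hermitian_def by (metis cinner_adjoint_mult_self cinner_commute)

lemma hermitian_inner: "hermitian H \<Longrightarrow> inner (H *v x) y = inner x (H *v y)"
  by (metis Re_cinner hermitian_def)

lemma matrix_vector_scaleR_commute: "(A::'a::real_algebra_1^'n^'m) *v (c *\<^sub>R x) = c *\<^sub>R (A *v x)"
  by (simp add: linear_scale)

lemma quadratic_form_le_by_homogeneity:
  fixes H :: "complex^'n^'n"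
  assumes "subspace V" and "y \<in> V"
    and max: "\<And>y. y \<in> V \<Longrightarrow> norm y = 1 \<Longrightarrow> inner (H *v y) y \<le> \<mu>"
  shows "inner (H *v y) y \<le> \<mu> * inner y y"
proof (cases "y = 0")
  case False
  have "inner (H *v ((1 / norm y) *\<^sub>R y)) ((1 / norm y) *\<^sub>R y) \<le> \<mu>"
    using assms False by (intro max) (simp_all add: subspace_scale)
  then show ?thesis
    using False by (simp add: matrix_vector_scaleR_commute power2_norm_eq_inner[symmetric]
        field_simps power2_eq_square)
qed simp

lemma nonpos_if_le_mult_all_pos:
  fixes a c :: real
  assumes "\<And>t. 0 < t \<Longrightarrow> a \<le> t * c"
  shows "a \<le> 0"
proof (rule ccontr)
  assume "\<not> a \<le> 0"
  define t where "t = a / (\<bar>c\<bar> + 1)"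
  have "0 < t"
    using \<open>\<not> a \<le> 0\<close> by (simp add: t_def)
  then have "a \<le> t * \<bar>c\<bar>"
    using assms[of t] by (smt (verit) abs_ge_self mult_left_mono)
  also have "\<dots> < a"
    using \<open>\<not> a \<le> 0\<close> by (simp add: t_def field_simps)
  finally show False
    by simp
qed

lemma hermitian_maximizer_is_eigenvector:
  fixes H :: "complex^'n^'n"
  assumes herm: "hermitian H" and V: "subspace V" "\<And>y. y \<in> V \<Longrightarrow> H *v y \<in> V"
    and x: "x \<in> V" "norm x = 1"
    and max: "\<And>y. y \<in> V \<Longrightarrow> norm y = 1 \<Longrightarrow> inner (H *v y) y \<le> inner (H *v x) x"
  shows "H *v x = inner (H *v x) x *\<^sub>R x"
proof -
  define \<mu> where "\<mu> = inner (H *v x) x"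
  define e where "e = H *v x - \<mu> *\<^sub>R x"
  have "e \<in> V"
    using V x by (simp add: e_def subspace_diff subspace_scale)
  have xx: "inner x x = 1"
    using x(2) by (simp add: power2_norm_eq_inner[symmetric])
  have ex: "inner e x = 0"
    by (simp add: e_def inner_diff_left xx \<mu>_def)
  have Hxe: "inner (H *v x) e = inner e e" "inner (H *v e) x = inner e e"
    using ex hermitian_inner[OF herm, of e x]
    by (simp_all add: e_def inner_diff_left inner_diff_right inner_commute)
  \<comment> \<open>the maximality of \<open>x\<close> in the direction \<open>e\<close>, to first order in \<open>t\<close>\<close>
  have "2 * inner e e \<le> t * (\<mu> * inner e e - inner (H *v e) e)" if "0 < t" for t
  proof -
    have "x + t *\<^sub>R e \<in> V"
      using V(1) x(1) \<open>e \<in> V\<close> by (simp add: subspace_add subspace_scale)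
    then have "inner (H *v (x + t *\<^sub>R e)) (x + t *\<^sub>R e) \<le> \<mu> * inner (x + t *\<^sub>R e) (x + t *\<^sub>R e)"
      using V(1) max by (intro quadratic_form_le_by_homogeneity) (simp_all add: \<mu>_def)
    then have "t * (2 * inner e e) \<le> t * (t * (\<mu> * inner e e - inner (H *v e) e))"
      by (simp add: matrix_vector_right_distrib matrix_vector_scaleR_commute inner_add_left
          inner_add_right Hxe ex inner_commute[of x e] xx \<mu>_def[symmetric] algebra_simps)
    then show ?thesis
      using that by (simp add: mult_le_cancel_left_pos)
  qed
  then have "2 * inner e e \<le> 0"
    by (rule nonpos_if_le_mult_all_pos)
  then have "inner e e = 0"
    using inner_ge_zero[of e] by linarith
  then show ?thesis
    by (simp add: e_def \<mu>_def)
qed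

lemma hermitian_exists_max_eigenvector:
  fixes H :: "complex^'n^'n"
  assumes herm: "hermitian H" and V: "subspace V" "\<And>y. y \<in> V \<Longrightarrow> H *v y \<in> V"
    and "V \<noteq> {0}"
  obtains x where "x \<in> V" "norm x = 1" "H *v x = inner (H *v x) x *\<^sub>R x"
    "\<And>y. y \<in> V \<Longrightarrow> norm y = 1 \<Longrightarrow> inner (H *v y) y \<le> inner (H *v x) x"
proof -
  obtain v where "v \<in> V" "v \<noteq> 0"
    using \<open>V \<noteq> {0}\<close> subspace_0[OF V(1)] by blast
  then have "(1 / norm v) *\<^sub>R v \<in> V \<inter> sphere 0 1"
    using V(1) by (simp add: subspace_scale)
  moreover have "compact (V \<inter> sphere 0 1)"
    using closed_subspace[OF V(1)] by (simp add: closed_Int_compact)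
  moreover have "continuous_on (V \<inter> sphere 0 1) (\<lambda>y. inner (H *v y) y)"
    by (intro continuous_intros linear_continuous_on linear_conv_bounded_linear[THEN iffD1]
        matrix_vector_mul_linear)
  ultimately obtain x where x: "x \<in> V \<inter> sphere 0 1"
    and max: "\<And>y. y \<in> V \<inter> sphere 0 1 \<Longrightarrow> inner (H *v y) y \<le> inner (H *v x) x"
    using continuous_attains_sup[of "V \<inter> sphere 0 1" "\<lambda>y. inner (H *v y) y"] by blast
  have "H *v x = inner (H *v x) x *\<^sub>R x"
    using x max by (intro hermitian_maximizer_is_eigenvector[OF herm V]) auto
  then show ?thesis
    using that x max by auto
qed

lemma orthonormal_on_lessThan_Suc:
  assumes "orthonormal_on {..<r} w" and "norm x = 1" and "\<And>i. i < r \<Longrightarrow> cinner x (w i) = 0"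
  shows "orthonormal_on {..<Suc r} (w(r := x))"
proof -
  have "cinner x x = 1"
    using assms(2) by (simp add: cinner_self)
  moreover have "cinner (w i) x = 0" if "i < r" for i
    using assms(3)[OF that] by (subst cinner_commute) simp
  ultimately show ?thesis
    using assms(1,3) by (auto simp: orthonormal_on_def less_Suc_eq)
qed

lemma subspace_orthogonal_complement:
  "subspace {y. \<forall>i<r. cinner y (w i) = 0}"
  by (simp add: subspace_def cinner_add_left cinner_scaleR_left)

lemma hermitian_orthogonal_complement_invariant:
  assumes "hermitian H" and "\<And>i. i < r \<Longrightarrow> H *v w i = \<mu> i *\<^sub>R w i"
    and "\<forall>i<r. cinner y (w i) = 0"
  shows "\<forall>i<r. cinner (H *v y) (w i) = 0"
  using assms by (simp add: hermitian_def cinner_scaleR_right)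

lemma hermitian_variational_eigenvectors:
  fixes H :: "complex^'n^'n"
  assumes herm: "hermitian H"
  shows "r \<le> CARD('n) \<Longrightarrow> \<exists>w \<mu>. orthonormal_on {..<r} w \<and> (\<forall>i<r. H *v w i = \<mu> i *\<^sub>R w i) \<and>
    (\<forall>i<r. \<forall>y. norm y = 1 \<and> (\<forall>j<i. cinner y (w j) = 0) \<longrightarrow> inner (H *v y) y \<le> \<mu> i)"
  \<comment> \<open>The last conjunct, \<open>\<mu> i\<close> being the maximum of the quadratic form on the unit sphere of the
    orthogonal complement of \<open>w 0, \<dots>, w (i - 1)\<close>, is what orders the eigenvalues.\<close>
proof (induction r)
  case 0
  then show ?case
    by (auto simp: orthonormal_on_def)
next
  case (Suc r)
  then obtain w \<mu> where on: "orthonormal_on {..<r} w" and eig: "\<forall>i<r. H *v w i = \<mu> i *\<^sub>R w i"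
    and max: "\<forall>i<r. \<forall>y. norm y = 1 \<and> (\<forall>j<i. cinner y (w j) = 0) \<longrightarrow> inner (H *v y) y \<le> \<mu> i"
    by auto
  define V where "V = {y. \<forall>i<r. cinner y (w i) = 0}"
  have sub: "subspace V"
    unfolding V_def by (rule subspace_orthogonal_complement)
  have inv: "H *v y \<in> V" if "y \<in> V" for y
    using hermitian_orthogonal_complement_invariant[OF herm, of r w \<mu> y] eig that
    by (simp add: V_def)
  have nz: "V \<noteq> {0}"
    using exists_orthogonal_nonzero[of r w] Suc.prems by (auto simp: V_def)
  obtain x where x: "x \<in> V" "norm x = 1" "H *v x = inner (H *v x) x *\<^sub>R x"
    and max_x: "\<And>y. y \<in> V \<Longrightarrow> norm y = 1 \<Longrightarrow> inner (H *v y) y \<le> inner (H *v x) x"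
    using hermitian_exists_max_eigenvector[OF herm sub inv nz] by blast
  let ?w = "w(r := x)" and ?\<mu> = "\<mu>(r := inner (H *v x) x)"
  have "orthonormal_on {..<Suc r} ?w"
    using x by (intro orthonormal_on_lessThan_Suc on) (auto simp: V_def)
  moreover have "\<forall>i<Suc r. H *v ?w i = ?\<mu> i *\<^sub>R ?w i"
    using eig x by (auto simp: less_Suc_eq)
  moreover have "\<forall>i<Suc r. \<forall>y. norm y = 1 \<and> (\<forall>j<i. cinner y (?w j) = 0) \<longrightarrow> inner (H *v y) y \<le> ?\<mu> i"
    using max max_x by (auto simp: less_Suc_eq V_def)
  ultimately show ?case
    by blast
qed

theorem hermitian_spectral_decomposition:
  fixes H :: "complex^'n^'n"
  assumes "hermitian H"
  obtains w \<mu> where "orthonormal_on {..<CARD('n)} w"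
    "\<And>i. i < CARD('n) \<Longrightarrow> H *v w i = \<mu> i *\<^sub>R w i"
    "\<And>i j. i \<le> j \<Longrightarrow> j < CARD('n) \<Longrightarrow> \<mu> j \<le> \<mu> i"
proof -
  obtain w \<mu> where on: "orthonormal_on {..<CARD('n)} w"
    and eig: "\<forall>i<CARD('n). H *v w i = \<mu> i *\<^sub>R w i"
    and max: "\<forall>i<CARD('n). \<forall>y. norm y = 1 \<and> (\<forall>j<i. cinner y (w j) = 0) \<longrightarrow> inner (H *v y) y \<le> \<mu> i"
    using hermitian_variational_eigenvectors[OF assms order_refl] by blast
  have "\<mu> j \<le> \<mu> i" if "i \<le> j" "j < CARD('n)" for i j
  proof -
    have "inner (H *v w j) (w j) = \<mu> j"
      using eig that norm_orthonormal_on[OF on, of j] by (simp add: power2_norm_eq_inner[symmetric])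
    moreover have "\<forall>l<i. cinner (w j) (w l) = 0"
      using orthonormal_onD[OF on] that by auto
    ultimately show ?thesis
      using max that norm_orthonormal_on[OF on, of j] by (metis le_less_trans lessThan_iff)
  qed
  then show ?thesis
    using that on eig by blast
qed

section \<open>Singular values\<close>

definition const_poly_mat :: "complex^'n^'m \<Rightarrow> complex poly^'n^'m" where
  "const_poly_mat A = (\<chi> i j. [:A $ i $ j:])"

lemma const_poly_mat_mult: "const_poly_mat (A ** B) = const_poly_mat A ** const_poly_mat B"
  by (simp add: const_poly_mat_def matrix_matrix_mult_def vec_eq_iff sum_to_poly mult_to_poly
      mult.commute)

lemma const_poly_mat_one: "const_poly_mat (mat 1) = mat 1"
  by (simp add: const_poly_mat_def mat_def vec_eq_iff one_pCons)

lemma char_poly_mat_eq_det: "char_poly_mat A = det (mat [:0, 1:] - const_poly_mat A)"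
  unfolding char_poly_mat_def const_poly_mat_def mat_def
  by (rule arg_cong[where f = det]) (simp add: vec_eq_iff)

lemma matrix_diff_ldistrib: "(A :: 'a::ring_1^'n^'m) ** (B - C) = A ** B - A ** C"
  by (simp add: matrix_matrix_mult_def vec_eq_iff right_diff_distrib sum_subtractf)

lemma matrix_diff_rdistrib: "((B - C) :: 'a::ring_1^'n^'m) ** A = B ** A - C ** A"
  by (simp add: matrix_matrix_mult_def vec_eq_iff left_diff_distrib sum_subtractf)

lemma matrix_mul_mat_commute: "(A :: 'a::comm_ring_1^'n^'n) ** mat c = mat c ** A"
  by (simp add: matrix_matrix_mult_def mat_def vec_eq_iff if_distrib if_distribR mult.commute
      cong: if_cong)

lemma char_poly_mat_similar:
  fixes P Q A :: "complex^'n^'n"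
  assumes "P ** Q = mat 1"
  shows "char_poly_mat (P ** A ** Q) = char_poly_mat A"
proof -
  let ?X = "mat [:0, 1:] :: complex poly^'n^'n"
    and ?P = "const_poly_mat P" and ?Q = "const_poly_mat Q"
  have PQ: "?P ** ?Q = mat 1"
    using assms by (metis const_poly_mat_mult const_poly_mat_one)
  have "?P ** ?X ** ?Q = ?X ** (?P ** ?Q)"
    by (simp add: matrix_mul_mat_commute[of ?P] matrix_mul_assoc)
  then have "?X = ?P ** ?X ** ?Q"
    by (simp add: PQ)
  then have "?X - const_poly_mat (P ** A ** Q) = ?P ** (?X - const_poly_mat A) ** ?Q"
    by (simp add: const_poly_mat_mult matrix_diff_ldistrib matrix_diff_rdistrib)
  then have "char_poly_mat (P ** A ** Q) = det (?X - const_poly_mat A) * (det ?P * det ?Q)"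
    by (simp add: char_poly_mat_eq_det det_mul mult_ac)
  also have "det ?P * det ?Q = 1"
    by (metis PQ det_I det_mul)
  finally show ?thesis
    by (simp add: char_poly_mat_eq_det)
qed

lemma char_poly_mat_diagonal:
  assumes "\<And>i j. i \<noteq> j \<Longrightarrow> D $ i $ j = 0"
  shows "char_poly_mat D = (\<Prod>i\<in>UNIV. [:- D $ i $ i, 1:])"
  unfolding char_poly_mat_def using assms by (subst det_diagonal) auto

lemma eigenvalues_mset_orthonormal_eigenbasis:
  fixes H :: "complex^'n^'n" and w :: "nat \<Rightarrow> complex^'n"
  assumes on: "orthonormal_on {..<CARD('n)} w"
    and eig: "\<And>l. l < CARD('n) \<Longrightarrow> H *v w l = \<mu> l *\<^sub>R w l"
  shows "eigenvalues_mset H = mset (map (\<lambda>l. complex_of_real (\<mu> l)) [0..<CARD('n)])"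
proof -
  obtain h :: "'n \<Rightarrow> nat" where h: "bij_betw h UNIV {..<CARD('n)}"
    using ex_bij_betw_finite_nat[of "UNIV :: 'n set"] by (auto simp: lessThan_atLeast0)
  then have h_less: "h a < CARD('n)" for a
    by (auto simp: bij_betw_def)
  define W :: "complex^'n^'n" where "W = (\<chi> i a. w (h a) $ i)"
  define D :: "complex^'n^'n" where "D = (\<chi> a b. if a = b then of_real (\<mu> (h a)) else 0)"
  have "H ** W = W ** D"
  proof -
    have "(H ** W) $ i $ b = (H *v w (h b)) $ i" for i b
      by (simp add: W_def matrix_matrix_mult_def matrix_vector_mult_def)
    then show ?thesis
      using eig[OF h_less]
      by (simp add: vec_eq_iff W_def D_def matrix_matrix_mult_def if_distrib if_distribR
          of_real_def mult.commute cong: if_cong)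
  qed
  then have "H = W ** D ** adjoint_mat W"
    using unitary_of_orthonormal_basis[OF on h]
    by (metis W_def matrix_mul_assoc matrix_mul_rid)
  then have "char_poly_mat H = (\<Prod>a\<in>UNIV. [:- of_real (\<mu> (h a)), 1:])"
    using unitary_of_orthonormal_basis[OF on h] char_poly_mat_diagonal[of D]
    by (simp add: char_poly_mat_similar W_def D_def)
  also have "\<dots> = (\<Prod>l<CARD('n). [:- of_real (\<mu> l), 1:])"
    by (rule prod.reindex_bij_betw[OF h])
  finally show ?thesis
    by (simp add: eigenvalues_mset_def proots_prod sum_unfold_sum_mset lessThan_atLeast0)
qed

lemma singular_values_eq_sqrt_eigenvalues:
  fixes A :: "complex^'n^'n" and w :: "nat \<Rightarrow> complex^'n"
  assumes on: "orthonormal_on {..<CARD('n)} w"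
    and eig: "\<And>l. l < CARD('n) \<Longrightarrow> (adjoint_mat A ** A) *v w l = \<mu> l *\<^sub>R w l"
    and dec: "\<And>i j. i \<le> j \<Longrightarrow> j < CARD('n) \<Longrightarrow> \<mu> j \<le> \<mu> i"
  shows "singular_values A = map (\<lambda>l. sqrt (\<mu> l)) [0..<CARD('n)]"
proof -
  define L where "L = map (\<lambda>l. sqrt (\<mu> l)) [0..<CARD('n)]"
  have "sorted (rev L)"
    using dec by (auto simp: sorted_iff_nth_mono L_def rev_nth)
  moreover have "image_mset (\<lambda>z. sqrt (Re z)) (eigenvalues_mset (adjoint_mat A ** A)) = mset (rev L)"
    by (simp add: eigenvalues_mset_orthonormal_eigenbasis[OF on eig] L_def multiset.map_comp o_def)
  ultimately have "singular_values A = rev (rev L)"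
    by (simp only: singular_values_def sorted_list_of_multiset_mset sorted_sort_id)
  then show ?thesis
    by (simp add: L_def)
qed

lemma eigenvalue_adjoint_mult_self:
  assumes "(adjoint_mat A ** A) *v w = \<mu> *\<^sub>R w" and "norm w = 1"
  shows "\<mu> = (norm (A *v w))\<^sup>2"
proof -
  have "of_real \<mu> = cinner ((adjoint_mat A ** A) *v w) w"
    using assms by (simp add: cinner_scaleR_left cinner_self)
  also have "\<dots> = of_real ((norm (A *v w))\<^sup>2)"
    by (simp only: cinner_adjoint_mult_self cinner_self)
  finally show ?thesis
    by (simp only: of_real_eq_iff)
qed

lemma right_singular_vectors:
  fixes A :: "complex^'n^'n"
  obtains w where "orthonormal_on {..<CARD('n)} w"
    "\<And>l. l < CARD('n) \<Longrightarrow> (adjoint_mat A ** A) *v w l = (singular_values A ! l)\<^sup>2 *\<^sub>R w l"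
    "\<And>l. l < CARD('n) \<Longrightarrow> singular_values A ! l = norm (A *v w l)"
    "\<And>i j. i \<le> j \<Longrightarrow> j < CARD('n) \<Longrightarrow> singular_values A ! j \<le> singular_values A ! i"
proof -
  obtain w \<mu> where on: "orthonormal_on {..<CARD('n)} w"
    and eig: "\<And>l. l < CARD('n) \<Longrightarrow> (adjoint_mat A ** A) *v w l = \<mu> l *\<^sub>R w l"
    and dec: "\<And>i j. i \<le> j \<Longrightarrow> j < CARD('n) \<Longrightarrow> \<mu> j \<le> \<mu> i"
    using hermitian_spectral_decomposition[OF hermitian_adjoint_mult_self] by blast
  have \<mu>: "\<mu> l = (norm (A *v w l))\<^sup>2" if "l < CARD('n)" for l
    using eigenvalue_adjoint_mult_self[OF eig norm_orthonormal_on[OF on]] that by simp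
  have s: "singular_values A ! l = sqrt (\<mu> l)" if "l < CARD('n)" for l
    using singular_values_eq_sqrt_eigenvalues[OF on eig dec] that by simp
  show ?thesis
  proof (rule that[OF on])
    show "(adjoint_mat A ** A) *v w l = (singular_values A ! l)\<^sup>2 *\<^sub>R w l"
      and "singular_values A ! l = norm (A *v w l)" if "l < CARD('n)" for l
      using that eig[OF that] s[OF that] \<mu>[OF that] by simp_all
    show "singular_values A ! j \<le> singular_values A ! i" if "i \<le> j" "j < CARD('n)" for i j
      using that s dec by simp
  qed
qed

lemma singular_values_nonneg: "l < CARD('n) \<Longrightarrow> 0 \<le> singular_values (A :: complex^'n^'n) ! l"
  by (metis right_singular_vectors norm_ge_zero)

lemma singular_values_antimono:
  "i \<le> j \<Longrightarrow> j < CARD('n) \<Longrightarrow> singular_values (A :: complex^'n^'n) ! j \<le> singular_values A ! i"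
  by (metis right_singular_vectors)

lemma singular_value_decomposition:
  fixes A :: "complex^'n^'n"
  obtains w y where "orthonormal_on {..<CARD('n)} w"
    "\<And>l. l < CARD('n) \<Longrightarrow> A *v w l = singular_values A ! l *\<^sub>R y l"
    "orthonormal_on {l. l < CARD('n) \<and> singular_values A ! l \<noteq> 0} y"
    "\<And>l. singular_values A ! l = 0 \<Longrightarrow> y l = 0"
proof -
  let ?s = "\<lambda>l. singular_values A ! l"
  obtain w where on: "orthonormal_on {..<CARD('n)} w"
    and eig: "\<And>l. l < CARD('n) \<Longrightarrow> (adjoint_mat A ** A) *v w l = (?s l)\<^sup>2 *\<^sub>R w l"
    and s: "\<And>l. l < CARD('n) \<Longrightarrow> ?s l = norm (A *v w l)"
    by (rule right_singular_vectors[of A]) blast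
  \<comment> \<open>\<open>1 / 0 = 0\<close> makes \<open>y l = 0\<close> for the vanishing singular values\<close>
  define y where "y l = (1 / ?s l) *\<^sub>R (A *v w l)" for l
  have "A *v w l = ?s l *\<^sub>R y l" if "l < CARD('n)" for l
    using s[OF that] by (simp add: y_def)
  moreover have "orthonormal_on {l. l < CARD('n) \<and> ?s l \<noteq> 0} y"
    unfolding orthonormal_on_def
  proof (intro ballI)
    fix l m
    assume "l \<in> {l. l < CARD('n) \<and> ?s l \<noteq> 0}" "m \<in> {l. l < CARD('n) \<and> ?s l \<noteq> 0}"
    then have l: "l < CARD('n)" "?s l \<noteq> 0" and m: "m < CARD('n)" "?s m \<noteq> 0"
      by auto
    have "cinner (A *v w l) (A *v w m) = of_real ((?s l)\<^sup>2) * cinner (w l) (w m)"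
      using eig[OF l(1)] by (simp add: cinner_adjoint_mult_self[symmetric] cinner_scaleR_left)
    then show "cinner (y l) (y m) = (if l = m then 1 else 0)"
      using orthonormal_onD[OF on, of l m] l m
      by (simp add: y_def cinner_scaleR_left cinner_scaleR_right power2_eq_square)
  qed
  moreover have "y l = 0" if "?s l = 0" for l
    using that by (simp add: y_def)
  ultimately show ?thesis
    using that on by blast
qed

lemma cinner_singular_expansion:
  fixes A :: "complex^'n^'n"
  assumes on: "orthonormal_on {..<CARD('n)} w"
    and svd: "\<And>l. l < CARD('n) \<Longrightarrow> A *v w l = s l *\<^sub>R y l"
  shows "cinner (A *v x) z = (\<Sum>l<CARD('n). of_real (s l) * (cinner x (w l) * cinner (y l) z))"
proof -
  have "A *v x = (\<Sum>l<CARD('n). cinner x (w l) *s (s l *\<^sub>R y l))"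
    by (subst orthonormal_basis_expansion[OF on, of x])
      (simp add: linear_sum[OF matrix_vector_mul_linear] vector_scalar_commute svd)
  then show ?thesis
    by (simp add: cinner_sum_left cinner_scale_left cinner_scaleR_left mult_ac)
qed

section \<open>Ky Fan norms\<close>

lemma sum_mult_le_sum_lessThan:
  fixes s t :: "nat \<Rightarrow> real"
  assumes "k \<le> n" and dec: "\<And>i j. i \<le> j \<Longrightarrow> j < n \<Longrightarrow> s j \<le> s i"
    and s_nonneg: "\<And>l. l < n \<Longrightarrow> 0 \<le> s l"
    and t: "\<And>l. l < n \<Longrightarrow> 0 \<le> t l \<and> t l \<le> 1" and t_sum: "(\<Sum>l<n. t l) \<le> k"
  shows "(\<Sum>l<n. s l * t l) \<le> (\<Sum>l<k. s l)"
proof -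
  \<comment> \<open>a threshold separating the first \<open>k\<close> values of \<open>s\<close> from the others\<close>
  define c where "c = (if k < n then s k else 0)"
  have "c \<ge> 0"
    using s_nonneg by (simp add: c_def)
  have "(s l - c) * (t l - of_bool (l < k)) \<le> 0" if "l < n" for l
  proof (cases "l < k")
    case True
    then have "c \<le> s l"
      using dec s_nonneg that by (simp add: c_def)
    then show ?thesis
      using True t[OF that] by (simp add: mult_nonneg_nonpos)
  next
    case False
    then have "s l \<le> c"
      using dec that \<open>k \<le> n\<close> by (simp add: c_def)
    then show ?thesis
      using False t[OF that] by (simp add: mult_nonpos_nonneg)
  qed
  then have "(\<Sum>l<n. (s l - c) * (t l - of_bool (l < k))) \<le> 0"
    by (intro sum_nonpos) simp
  moreover have "{..<n} \<inter> {l. l < k} = {..<k}"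
    using \<open>k \<le> n\<close> by auto
  then have "(\<Sum>l<n. (s l - c) * (t l - of_bool (l < k)))
      = (\<Sum>l<n. s l * t l) - (\<Sum>l<k. s l) + c * (k - (\<Sum>l<n. t l))"
    by (simp add: algebra_simps sum_subtractf sum.distrib sum_distrib_left)
  moreover have "c * (k - (\<Sum>l<n. t l)) \<ge> 0"
    using \<open>c \<ge> 0\<close> t_sum by simp
  ultimately show ?thesis
    by linarith
qed

lemma norm_sum_mult_le:
  fixes f g :: "'i \<Rightarrow> complex"
  shows "cmod (\<Sum>i\<in>I. f i * g i) \<le> ((\<Sum>i\<in>I. (cmod (f i))\<^sup>2) + (\<Sum>i\<in>I. (cmod (g i))\<^sup>2)) / 2"
proof -
  have "cmod (f i * g i) \<le> ((cmod (f i))\<^sup>2 + (cmod (g i))\<^sup>2) / 2" for i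
    using sum_squares_bound[of "cmod (f i)" "cmod (g i)"] by (simp add: norm_mult)
  then have "cmod (\<Sum>i\<in>I. f i * g i) \<le> (\<Sum>i\<in>I. ((cmod (f i))\<^sup>2 + (cmod (g i))\<^sup>2) / 2)"
    by (intro order_trans[OF norm_sum] sum_mono)
  also have "\<dots> = ((\<Sum>i\<in>I. (cmod (f i))\<^sup>2) + (\<Sum>i\<in>I. (cmod (g i))\<^sup>2)) / 2"
    by (simp only: sum_divide_distrib[symmetric] sum.distrib)
  finally show ?thesis .
qed

definition ky_fan_norm :: "nat \<Rightarrow> complex^'n^'n \<Rightarrow> real" where
  "ky_fan_norm k A = (\<Sum>l<k. singular_values A ! l)"

lemma ky_fan_inequality:
  fixes A :: "complex^'n^'n" and u v :: "'i \<Rightarrow> complex^'n"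
  assumes "k \<le> CARD('n)" and I: "finite I" "card I \<le> k"
    and u: "orthonormal_on I u" and v: "orthonormal_on I v"
  shows "Re (\<Sum>i\<in>I. cinner (A *v u i) (v i)) \<le> ky_fan_norm k A"
proof -
  let ?n = "CARD('n)" and ?s = "\<lambda>l. singular_values A ! l"
  obtain w y where w: "orthonormal_on {..<?n} w"
    and svd: "\<And>l. l < ?n \<Longrightarrow> A *v w l = ?s l *\<^sub>R y l"
    and y: "orthonormal_on {l. l < ?n \<and> ?s l \<noteq> 0} y"
    and y0: "\<And>l. ?s l = 0 \<Longrightarrow> y l = 0"
    by (rule singular_value_decomposition[of A]) blast
  have w': "orthonormal_on {l. l < ?n \<and> w l \<noteq> 0} w"
    by (rule orthonormal_on_subset[OF w]) auto
  have y': "orthonormal_on {l. l < ?n \<and> y l \<noteq> 0} y"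
    using y0 by (intro orthonormal_on_subset[OF y]) auto
  define a where "a l = (\<Sum>i\<in>I. (cmod (cinner (u i) (w l)))\<^sup>2)" for l
  define b where "b l = (\<Sum>i\<in>I. (cmod (cinner (v i) (y l)))\<^sup>2)" for l
  note a = orthonormal_weights_bounds[OF I(1) u w', folded a_def]
  note b = orthonormal_weights_bounds[OF I(1) v y', folded b_def]
  have t_sum: "(\<Sum>l<?n. (a l + b l) / 2) \<le> k"
    using a(2) b(2) I(2) by (simp add: sum.distrib sum_divide_distrib[symmetric])
  have "Re (\<Sum>i\<in>I. cinner (A *v u i) (v i))
      = (\<Sum>l<?n. ?s l * Re (\<Sum>i\<in>I. cinner (u i) (w l) * cinner (y l) (v i)))"
    by (simp add: cinner_singular_expansion[OF w svd] sum_distrib_left sum.swap[of _ I])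
  also have "\<dots> \<le> (\<Sum>l<?n. ?s l * ((a l + b l) / 2))"
    unfolding a_def b_def cmod_cinner_commute[of "v _"] using singular_values_nonneg
    by (intro sum_mono mult_left_mono order_trans[OF complex_Re_le_cmod norm_sum_mult_le]) auto
  also have "\<dots> \<le> ky_fan_norm k A"
  proof -
    have "0 \<le> (a l + b l) / 2 \<and> (a l + b l) / 2 \<le> 1" if "l < ?n" for l
      using a(1)[OF that] b(1)[OF that] by (simp add: a_def b_def sum_nonneg)
    then show ?thesis
      unfolding ky_fan_norm_def using assms(1) singular_values_antimono singular_values_nonneg t_sum
      by (intro sum_mult_le_sum_lessThan)
  qed
  finally show ?thesis .
qed

lemma ky_fan_norm_attained:
  fixes A :: "complex^'n^'n"
  assumes "k \<le> CARD('n)"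
  obtains I :: "nat set" and u v :: "nat \<Rightarrow> complex^'n"
  where "finite I" "card I \<le> k" "orthonormal_on I u" "orthonormal_on I v"
    "Re (\<Sum>i\<in>I. cinner (A *v u i) (v i)) = ky_fan_norm k A"
proof -
  let ?n = "CARD('n)" and ?s = "\<lambda>l. singular_values A ! l"
  obtain w y where w: "orthonormal_on {..<?n} w"
    and svd: "\<And>l. l < ?n \<Longrightarrow> A *v w l = ?s l *\<^sub>R y l"
    and y: "orthonormal_on {l. l < ?n \<and> ?s l \<noteq> 0} y"
    by (rule singular_value_decomposition[of A]) blast
  define I where "I = {l. l < k \<and> ?s l \<noteq> 0}"
  have "I \<subseteq> {..<k}"
    by (auto simp: I_def)
  then have "finite I" "card I \<le> k"
    using finite_subset card_mono[of "{..<k}" I] by auto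
  have I_sub: "I \<subseteq> {l. l < ?n \<and> ?s l \<noteq> 0}"
    using assms by (auto simp: I_def)
  have u: "orthonormal_on I w"
    using I_sub by (intro orthonormal_on_subset[OF w]) auto
  have v: "orthonormal_on I y"
    using I_sub by (rule orthonormal_on_subset[OF y])
  have "cinner (A *v w l) (y l) = of_real (?s l)" if "l \<in> I" for l
    using that I_sub orthonormal_onD[OF y, of l l] svd[of l] by (auto simp: cinner_scaleR_left)
  then have "Re (\<Sum>i\<in>I. cinner (A *v w i) (y i)) = (\<Sum>l\<in>I. ?s l)"
    by simp
  also have "\<dots> = ky_fan_norm k A"
    unfolding ky_fan_norm_def by (rule sum.mono_neutral_left) (auto simp: I_def)
  finally show ?thesis
    by (rule that[OF \<open>finite I\<close> \<open>card I \<le> k\<close> u v])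
qed

section \<open>Maximum principle\<close>

lemma holomorphic_Re_maximum_imp_constant:
  assumes "f holomorphic_on S" "open S" "connected S" "z0 \<in> S"
    and max: "\<And>z. z \<in> S \<Longrightarrow> Re (f z) \<le> Re (f z0)" and "z \<in> S"
  shows "Re (f z) = Re (f z0)"
proof -
  \<comment> \<open>\<open>Re f\<close> is maximal where \<open>|exp \<circ> f|\<close> is\<close>
  have "(\<lambda>z. exp (f z)) constant_on S"
    using assms(1-4) max
    by (intro maximum_modulus_principle[of _ S S z0])
      (auto intro!: holomorphic_intros simp: norm_exp_eq_Re)
  then have "norm (exp (f z)) = norm (exp (f z0))"
    using assms(4,6) by (metis constant_on_def)
  then show ?thesis
    by (simp add: norm_exp_eq_Re)
qed

lemma ky_fan_norm_maximum_principle: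
  fixes F :: "complex \<Rightarrow> complex^'n^'n"
  assumes "k \<le> CARD('n)" "open \<Omega>" "connected \<Omega>"
    and analytic: "\<And>i j. (\<lambda>z. F z $ i $ j) analytic_on \<Omega>"
    and "z0 \<in> \<Omega>" and max: "\<And>z. z \<in> \<Omega> \<Longrightarrow> ky_fan_norm k (F z) \<le> ky_fan_norm k (F z0)"
    and "z \<in> \<Omega>"
  shows "ky_fan_norm k (F z) = ky_fan_norm k (F z0)"
proof -
  obtain I :: "nat set" and u v :: "nat \<Rightarrow> complex^'n" where I: "finite I" "card I \<le> k"
    and uv: "orthonormal_on I u" "orthonormal_on I v"
    and attained: "Re (\<Sum>i\<in>I. cinner (F z0 *v u i) (v i)) = ky_fan_norm k (F z0)"
    using ky_fan_norm_attained[OF assms(1)] by metis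
  define \<phi> where "\<phi> z = (\<Sum>i\<in>I. cinner (F z *v u i) (v i))" for z
  have "\<phi> holomorphic_on \<Omega>"
    unfolding \<phi>_def cinner_def matrix_vector_mult_def vec_lambda_beta
    by (intro analytic_imp_holomorphic analytic_intros analytic)
  have le: "Re (\<phi> z) \<le> ky_fan_norm k (F z)" for z
    unfolding \<phi>_def by (rule ky_fan_inequality[OF assms(1) I uv])
  have attained': "Re (\<phi> z0) = ky_fan_norm k (F z0)"
    using attained by (simp only: \<phi>_def)
  have "Re (\<phi> z') \<le> Re (\<phi> z0)" if "z' \<in> \<Omega>" for z'
    using le[of z'] max[OF that] attained' by linarith
  with \<open>\<phi> holomorphic_on \<Omega>\<close> have "Re (\<phi> z) = Re (\<phi> z0)"
    using assms by (intro holomorphic_Re_maximum_imp_constant[of \<phi> \<Omega>])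
  then show ?thesis
    using le[of z] max[OF \<open>z \<in> \<Omega>\<close>] attained' by linarith
qed

lemma ky_fan_norm_Suc: "ky_fan_norm (Suc k) A = ky_fan_norm k A + sval (Suc k) A"
  by (simp add: ky_fan_norm_def sval_def)

lemma ky_fan_norm_cong:
  assumes "\<And>l. 1 \<le> l \<Longrightarrow> l \<le> k \<Longrightarrow> sval l A = sval l B"
  shows "ky_fan_norm k A = ky_fan_norm k B"
proof -
  have "singular_values A ! l = singular_values B ! l" if "l < k" for l
    using assms[of "Suc l"] that by (simp add: sval_def)
  then show ?thesis
    unfolding ky_fan_norm_def by (intro sum.cong) auto
qed

lemma sval_constant_step:
  fixes F :: "complex \<Rightarrow> complex^'n^'n"
  assumes "Suc k \<le> CARD('n)" "open \<Omega>" "connected \<Omega>"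
    and "\<And>i j. (\<lambda>z. F z $ i $ j) analytic_on \<Omega>"
    and prefix: "\<And>z. z \<in> \<Omega> \<Longrightarrow> ky_fan_norm k (F z) = c"
    and "z0 \<in> \<Omega>" and max: "\<And>z. z \<in> \<Omega> \<Longrightarrow> sval (Suc k) (F z) \<le> sval (Suc k) (F z0)"
    and "z \<in> \<Omega>"
  shows "sval (Suc k) (F z) = sval (Suc k) (F z0)"
proof -
  have "ky_fan_norm (Suc k) (F z') \<le> ky_fan_norm (Suc k) (F z0)" if "z' \<in> \<Omega>" for z'
    using max[OF that] prefix[OF that] prefix[OF \<open>z0 \<in> \<Omega>\<close>] by (simp add: ky_fan_norm_Suc)
  then have "ky_fan_norm (Suc k) (F z) = ky_fan_norm (Suc k) (F z0)"
    using assms(1-4,6,8) by (intro ky_fan_norm_maximum_principle)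
  then show ?thesis
    using prefix[OF \<open>z \<in> \<Omega>\<close>] prefix[OF \<open>z0 \<in> \<Omega>\<close>] by (simp add: ky_fan_norm_Suc)
qed

theorem corollary7:
  fixes F :: "complex \<Rightarrow> complex^'n^'n" and \<Omega> :: "complex set" and m :: nat
  assumes "1 \<le> m" and "m \<le> CARD('n)"
    and "open \<Omega>" and "connected \<Omega>" and "\<Omega> \<noteq> {}"
    and "\<And>i j. (\<lambda>z. F z $ i $ j) analytic_on \<Omega>"
    and "\<And>k. k \<in> {1..m} \<Longrightarrow> \<exists>z0\<in>\<Omega>. \<forall>z\<in>\<Omega>. sval k (F z) \<le> sval k (F z0)"
  shows "\<forall>k\<in>{1..m}. \<exists>c. \<forall>z\<in>\<Omega>. sval k (F z) = c"
proof -
  obtain p where "p \<in> \<Omega>"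
    using assms(5) by blast
  have "\<forall>z\<in>\<Omega>. sval k (F z) = sval k (F p)" if "k \<in> {1..m}" for k
    using that
  proof (induction k rule: less_induct)
    case (less k)
    then obtain j where k: "k = Suc j" and "Suc j \<le> CARD('n)"
      using assms(2) by (cases k) auto
    have prefix: "ky_fan_norm j (F z) = ky_fan_norm j (F p)" if "z \<in> \<Omega>" for z
      using less.IH less.prems that by (intro ky_fan_norm_cong) (auto simp: k)
    obtain z0 where z0: "z0 \<in> \<Omega>" and max: "\<And>z. z \<in> \<Omega> \<Longrightarrow> sval k (F z) \<le> sval k (F z0)"
      using assms(7)[OF less.prems] by blast
    have "sval k (F z) = sval k (F z0)" if "z \<in> \<Omega>" for z
      unfolding k by (rule sval_constant_step[OF \<open>Suc j \<le> CARD('n)\<close> assms(3,4,6) prefix z0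
          max[unfolded k] that])
    then show ?case
      using \<open>p \<in> \<Omega>\<close> by metis
  qed
  then show ?thesis
    by blast
qed

end
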